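(* A residuated lattice $L$ is a BL-algebra if and only if for all $x,y,z\in L$, $$[x\odot(x\rightarrow y)]\rightarrow z=(x\rightarrow z)\vee(y\rightarrow z).$$
   Context: A (commutative) residuated lattice is an algebra $(L,\wedge,\vee,\odot,\rightarrow,0,1)$ such that $(L,\wedge,\vee,0,1)$ is a bounded lattice, $(L,\odot,1)$ is a commutative ordered monoid, and $z\leq x\rightarrow y$ iff $x\odot z\leq y$ for all $x,y,z\in L$. A BL-algebra is a residuated lattice satisfying prelinearity $(x\rightarrow y)\vee(y\rightarrow x)=1$ and divisibility $x\odot(x\rightarrow y)=x\wedge y$ for all $x,y$. *)

theory Defs
  imports Main
begin

definition rl_le :: "('a \<Rightarrow> 'a \<Rightarrow> 'a) \<Rightarrow> 'a \<Rightarrow> 'a \<Rightarrow> bool" where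
  "rl_le meet x y \<longleftrightarrow> meet x y = x"

definition residuated_lattice ::
  "'a set \<Rightarrow> ('a \<Rightarrow> 'a \<Rightarrow> 'a) \<Rightarrow> ('a \<Rightarrow> 'a \<Rightarrow> 'a) \<Rightarrow> ('a \<Rightarrow> 'a \<Rightarrow> 'a)
    \<Rightarrow> ('a \<Rightarrow> 'a \<Rightarrow> 'a) \<Rightarrow> 'a \<Rightarrow> 'a \<Rightarrow> bool" where
  "residuated_lattice L meet join odot imp zero one \<longleftrightarrow>
     \<comment> \<open>closure\<close>
     zero \<in> L \<and> one \<in> L \<and>
     (\<forall>x\<in>L. \<forall>y\<in>L. meet x y \<in> L \<and> join x y \<in> L \<and> odot x y \<in> L \<and> imp x y \<in> L) \<and>
     \<comment> \<open>lattice axioms\<close>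
     (\<forall>x\<in>L. \<forall>y\<in>L. meet x y = meet y x \<and> join x y = join y x) \<and>
     (\<forall>x\<in>L. \<forall>y\<in>L. \<forall>z\<in>L. meet x (meet y z) = meet (meet x y) z \<and>
                           join x (join y z) = join (join x y) z) \<and>
     (\<forall>x\<in>L. \<forall>y\<in>L. meet x (join x y) = x \<and> join x (meet x y) = x) \<and>
     \<comment> \<open>bounds\<close>
     (\<forall>x\<in>L. rl_le meet zero x \<and> rl_le meet x one) \<and>
     \<comment> \<open>commutative monoid with unit one\<close>
     (\<forall>x\<in>L. \<forall>y\<in>L. odot x y = odot y x) \<and>
     (\<forall>x\<in>L. \<forall>y\<in>L. \<forall>z\<in>L. odot x (odot y z) = odot (odot x y) z) \<and>
     (\<forall>x\<in>L. odot x one = x) \<and>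
     \<comment> \<open>ordered monoid\<close>
     (\<forall>x\<in>L. \<forall>y\<in>L. \<forall>z\<in>L. rl_le meet x y \<longrightarrow> rl_le meet (odot x z) (odot y z)) \<and>
     \<comment> \<open>residuation\<close>
     (\<forall>x\<in>L. \<forall>y\<in>L. \<forall>z\<in>L. rl_le meet z (imp x y) \<longleftrightarrow> rl_le meet (odot x z) y)"

definition BL_algebra ::
  "'a set \<Rightarrow> ('a \<Rightarrow> 'a \<Rightarrow> 'a) \<Rightarrow> ('a \<Rightarrow> 'a \<Rightarrow> 'a) \<Rightarrow> ('a \<Rightarrow> 'a \<Rightarrow> 'a)
    \<Rightarrow> ('a \<Rightarrow> 'a \<Rightarrow> 'a) \<Rightarrow> 'a \<Rightarrow> 'a \<Rightarrow> bool" where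
  "BL_algebra L meet join odot imp zero one \<longleftrightarrow>
     residuated_lattice L meet join odot imp zero one \<and>
     (\<forall>x\<in>L. \<forall>y\<in>L. join (imp x y) (imp y x) = one) \<and>
     (\<forall>x\<in>L. \<forall>y\<in>L. odot x (imp x y) = meet x y)"

end

theory Submission
  imports Defs
begin

text \<open>Both directions rest on the identity ((x \<sqinter> y) \<rightarrow> z) = (x \<rightarrow> z) \<squnion> (y \<rightarrow> z),
  which holds in every prelinear residuated lattice: the inequality from right to left is
  antitonicity of the residuum, and for the other one the element a = (x \<sqinter> y) \<rightarrow> z is split as
  a \<odot> (x \<rightarrow> y) \<squnion> a \<odot> (y \<rightarrow> x), whose two parts lie below x \<rightarrow> z and y \<rightarrow> z.
  Divisibility turns this identity into the one of the theorem.
  Conversely, instantiating the identity of the theorem with z = x \<odot> (x \<rightarrow> y) gives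
  (x \<rightarrow> z) \<squnion> (y \<rightarrow> z) = z \<rightarrow> z = 1, hence x \<sqinter> y \<le> z; as z \<le> x \<sqinter> y holds in every residuated
  lattice, this is divisibility. Instantiating it with z = x \<sqinter> y then gives
  1 = (x \<rightarrow> x \<sqinter> y) \<squnion> (y \<rightarrow> x \<sqinter> y) \<le> (x \<rightarrow> y) \<squnion> (y \<rightarrow> x).\<close>

locale residuated_lattice_on =
  fixes L :: "'a set"
    and meet (infixl \<open>\<sqinter>\<close> 70)
    and join (infixl \<open>\<squnion>\<close> 65)
    and odot (infixl \<open>\<odot>\<close> 70)
    and imp (infixr \<open>\<rightarrow>\<close> 60)
    and zero one :: 'a
  assumes residuated: "residuated_lattice L meet join odot imp zero one"
begin

abbreviation le (infix \<open>\<preceq>\<close> 50) where "x \<preceq> y \<equiv> rl_le meet x y"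

lemma one_closed [simp]: "one \<in> L"
  using residuated[unfolded residuated_lattice_def] by blast

lemma meet_closed [simp]: "x \<in> L \<Longrightarrow> y \<in> L \<Longrightarrow> x \<sqinter> y \<in> L"
  and join_closed [simp]: "x \<in> L \<Longrightarrow> y \<in> L \<Longrightarrow> x \<squnion> y \<in> L"
  and odot_closed [simp]: "x \<in> L \<Longrightarrow> y \<in> L \<Longrightarrow> x \<odot> y \<in> L"
  and imp_closed [simp]: "x \<in> L \<Longrightarrow> y \<in> L \<Longrightarrow> x \<rightarrow> y \<in> L"
  using residuated[unfolded residuated_lattice_def] by auto

lemma meet_comm: "x \<in> L \<Longrightarrow> y \<in> L \<Longrightarrow> x \<sqinter> y = y \<sqinter> x"
  and join_comm: "x \<in> L \<Longrightarrow> y \<in> L \<Longrightarrow> x \<squnion> y = y \<squnion> x"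
  and meet_assoc: "x \<in> L \<Longrightarrow> y \<in> L \<Longrightarrow> z \<in> L \<Longrightarrow> x \<sqinter> (y \<sqinter> z) = x \<sqinter> y \<sqinter> z"
  and join_assoc: "x \<in> L \<Longrightarrow> y \<in> L \<Longrightarrow> z \<in> L \<Longrightarrow> x \<squnion> (y \<squnion> z) = x \<squnion> y \<squnion> z"
  and meet_join_absorb: "x \<in> L \<Longrightarrow> y \<in> L \<Longrightarrow> x \<sqinter> (x \<squnion> y) = x"
  and join_meet_absorb: "x \<in> L \<Longrightarrow> y \<in> L \<Longrightarrow> x \<squnion> (x \<sqinter> y) = x"
  using residuated[unfolded residuated_lattice_def] by blast+

lemma le_one: "x \<in> L \<Longrightarrow> x \<preceq> one"
  and odot_comm: "x \<in> L \<Longrightarrow> y \<in> L \<Longrightarrow> x \<odot> y = y \<odot> x"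
  and odot_assoc: "x \<in> L \<Longrightarrow> y \<in> L \<Longrightarrow> z \<in> L \<Longrightarrow> x \<odot> (y \<odot> z) = x \<odot> y \<odot> z"
  and odot_one [simp]: "x \<in> L \<Longrightarrow> x \<odot> one = x"
  and odot_mono_left: "x \<in> L \<Longrightarrow> y \<in> L \<Longrightarrow> z \<in> L \<Longrightarrow> x \<preceq> y \<Longrightarrow> x \<odot> z \<preceq> y \<odot> z"
  and residuation: "x \<in> L \<Longrightarrow> y \<in> L \<Longrightarrow> z \<in> L \<Longrightarrow> z \<preceq> x \<rightarrow> y \<longleftrightarrow> x \<odot> z \<preceq> y"
  using residuated[unfolded residuated_lattice_def] by blast+

lemma le_refl: "x \<in> L \<Longrightarrow> x \<preceq> x"
  by (metis join_meet_absorb meet_join_absorb meet_closed rl_le_def)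

lemma le_antisym: "x \<in> L \<Longrightarrow> y \<in> L \<Longrightarrow> x \<preceq> y \<Longrightarrow> y \<preceq> x \<Longrightarrow> x = y"
  by (metis meet_comm rl_le_def)

lemma le_trans: "x \<in> L \<Longrightarrow> y \<in> L \<Longrightarrow> z \<in> L \<Longrightarrow> x \<preceq> y \<Longrightarrow> y \<preceq> z \<Longrightarrow> x \<preceq> z"
  by (metis meet_assoc rl_le_def)

lemma le_one_iff: "x \<in> L \<Longrightarrow> one \<preceq> x \<longleftrightarrow> x = one"
  using le_antisym le_one le_refl by fastforce

lemma le_iff_join_eq: "x \<in> L \<Longrightarrow> y \<in> L \<Longrightarrow> x \<preceq> y \<longleftrightarrow> x \<squnion> y = y"
  by (metis join_comm join_meet_absorb meet_comm meet_join_absorb rl_le_def)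

lemma join_upper1: "x \<in> L \<Longrightarrow> y \<in> L \<Longrightarrow> x \<preceq> x \<squnion> y"
  by (simp add: meet_join_absorb rl_le_def)

lemma join_upper2: "x \<in> L \<Longrightarrow> y \<in> L \<Longrightarrow> y \<preceq> x \<squnion> y"
  by (metis join_comm join_upper1)

lemma join_least: "x \<in> L \<Longrightarrow> y \<in> L \<Longrightarrow> z \<in> L \<Longrightarrow> x \<preceq> z \<Longrightarrow> y \<preceq> z \<Longrightarrow> x \<squnion> y \<preceq> z"
  by (metis join_assoc join_closed le_iff_join_eq)

lemma join_mono:
  assumes "a \<in> L" "b \<in> L" "c \<in> L" "d \<in> L" "a \<preceq> c" "b \<preceq> d"
  shows "a \<squnion> b \<preceq> c \<squnion> d"
  using assms by (meson join_closed join_least join_upper1 join_upper2 le_trans)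

lemma meet_lower1: "x \<in> L \<Longrightarrow> y \<in> L \<Longrightarrow> x \<sqinter> y \<preceq> x"
  by (metis meet_assoc meet_comm le_refl rl_le_def)

lemma meet_lower2: "x \<in> L \<Longrightarrow> y \<in> L \<Longrightarrow> x \<sqinter> y \<preceq> y"
  by (metis meet_comm meet_lower1)

lemma meet_greatest: "x \<in> L \<Longrightarrow> y \<in> L \<Longrightarrow> z \<in> L \<Longrightarrow> z \<preceq> x \<Longrightarrow> z \<preceq> y \<Longrightarrow> z \<preceq> x \<sqinter> y"
  by (metis meet_assoc rl_le_def)

lemma odot_mono_right: "x \<in> L \<Longrightarrow> y \<in> L \<Longrightarrow> z \<in> L \<Longrightarrow> x \<preceq> y \<Longrightarrow> z \<odot> x \<preceq> z \<odot> y"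
  by (metis odot_comm odot_mono_left)

lemma odot_imp_le: "x \<in> L \<Longrightarrow> y \<in> L \<Longrightarrow> x \<odot> (x \<rightarrow> y) \<preceq> y"
  by (simp add: le_refl flip: residuation)

lemma odot_imp_le_meet:
  assumes "x \<in> L" "y \<in> L"
  shows "x \<odot> (x \<rightarrow> y) \<preceq> x \<sqinter> y"
proof -
  have "x \<odot> (x \<rightarrow> y) \<preceq> x"
    using assms odot_mono_right[of "x \<rightarrow> y" one x] by (simp add: le_one)
  with assms show ?thesis
    by (simp add: meet_greatest odot_imp_le)
qed

lemma imp_self:
  assumes "x \<in> L"
  shows "x \<rightarrow> x = one"
proof -
  have "one \<preceq> x \<rightarrow> x"
    using assms residuation[of x x one] by (simp add: le_refl)
  with assms show ?thesis
    by (simp add: le_one_iff)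
qed

lemma odot_imp_le_of_le:
  assumes "w \<in> L" "x \<in> L" "z \<in> L" "w \<preceq> x"
  shows "w \<odot> (x \<rightarrow> z) \<preceq> z"
proof -
  have "w \<odot> (x \<rightarrow> z) \<preceq> x \<odot> (x \<rightarrow> z)"
    using assms by (simp add: odot_mono_left)
  then show ?thesis
    using assms le_trans[OF _ _ _ _ odot_imp_le] by simp
qed

lemma imp_antimono_left:
  "x \<in> L \<Longrightarrow> y \<in> L \<Longrightarrow> z \<in> L \<Longrightarrow> x \<preceq> y \<Longrightarrow> y \<rightarrow> z \<preceq> x \<rightarrow> z"
  by (simp add: odot_imp_le_of_le residuation)

lemma imp_mono_right:
  assumes "x \<in> L" "y \<in> L" "z \<in> L" "x \<preceq> y"
  shows "z \<rightarrow> x \<preceq> z \<rightarrow> y"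
proof -
  have "z \<odot> (z \<rightarrow> x) \<preceq> y"
    by (rule le_trans[OF _ _ _ odot_imp_le]) (use assms in simp_all)
  with assms show ?thesis
    by (simp add: residuation)
qed

lemma odot_join_distrib:
  assumes "a \<in> L" "b \<in> L" "c \<in> L"
  shows "a \<odot> (b \<squnion> c) = a \<odot> b \<squnion> a \<odot> c"
proof (rule le_antisym)
  let ?r = "a \<odot> b \<squnion> a \<odot> c"
  have "b \<squnion> c \<preceq> a \<rightarrow> ?r"
    using assms by (intro join_least) (simp_all add: residuation join_upper1 join_upper2)
  with assms show "a \<odot> (b \<squnion> c) \<preceq> ?r"
    by (simp add: residuation)
  show "?r \<preceq> a \<odot> (b \<squnion> c)"
    using assms by (intro join_least) (simp_all add: join_upper1 join_upper2 odot_mono_right)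
qed (use assms in simp_all)

lemma join_imp_le_imp_meet:
  "x \<in> L \<Longrightarrow> y \<in> L \<Longrightarrow> z \<in> L \<Longrightarrow> (x \<rightarrow> z) \<squnion> (y \<rightarrow> z) \<preceq> (x \<sqinter> y) \<rightarrow> z"
  by (simp add: imp_antimono_left join_least meet_lower1 meet_lower2)

lemma imp_meet_odot_imp_le:
  assumes "x \<in> L" "y \<in> L" "z \<in> L"
  shows "((x \<sqinter> y) \<rightarrow> z) \<odot> (x \<rightarrow> y) \<preceq> x \<rightarrow> z"
proof -
  let ?a = "(x \<sqinter> y) \<rightarrow> z"
  have "x \<odot> (?a \<odot> (x \<rightarrow> y)) = (x \<odot> (x \<rightarrow> y)) \<odot> ?a"
    using assms odot_comm[of ?a "x \<rightarrow> y"] by (simp add: odot_assoc)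
  moreover have "(x \<odot> (x \<rightarrow> y)) \<odot> ?a \<preceq> (x \<sqinter> y) \<odot> ?a"
    using assms by (simp add: odot_imp_le_meet odot_mono_left)
  moreover have "(x \<sqinter> y) \<odot> ?a \<preceq> z"
    using assms by (simp add: odot_imp_le)
  ultimately have "x \<odot> (?a \<odot> (x \<rightarrow> y)) \<preceq> z"
    using assms le_trans[of "(x \<odot> (x \<rightarrow> y)) \<odot> ?a" "(x \<sqinter> y) \<odot> ?a" z] by simp
  with assms show ?thesis
    by (simp add: residuation)
qed

lemma imp_meet_eq_join_imp:
  assumes prelinear: "\<And>x y. x \<in> L \<Longrightarrow> y \<in> L \<Longrightarrow> (x \<rightarrow> y) \<squnion> (y \<rightarrow> x) = one"
    and x: "x \<in> L" and y: "y \<in> L" and z: "z \<in> L"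
  shows "(x \<sqinter> y) \<rightarrow> z = (x \<rightarrow> z) \<squnion> (y \<rightarrow> z)"
proof (rule le_antisym)
  let ?a = "(x \<sqinter> y) \<rightarrow> z"
  have "?a = ?a \<odot> ((x \<rightarrow> y) \<squnion> (y \<rightarrow> x))"
    using assms by simp
  also have "\<dots> = ?a \<odot> (x \<rightarrow> y) \<squnion> ((y \<sqinter> x) \<rightarrow> z) \<odot> (y \<rightarrow> x)"
    using x y z by (simp add: odot_join_distrib meet_comm[of y x])
  also have "\<dots> \<preceq> (x \<rightarrow> z) \<squnion> (y \<rightarrow> z)"
    using assms by (simp add: imp_meet_odot_imp_le join_mono)
  finally show "?a \<preceq> (x \<rightarrow> z) \<squnion> (y \<rightarrow> z)" .
  show "(x \<rightarrow> z) \<squnion> (y \<rightarrow> z) \<preceq> ?a"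
    using x y z by (rule join_imp_le_imp_meet)
qed (use assms in simp_all)

lemma meet_le_if_join_imp_eq_one:
  assumes "x \<in> L" "y \<in> L" "z \<in> L"
    and one_eq: "(x \<rightarrow> z) \<squnion> (y \<rightarrow> z) = one"
  shows "x \<sqinter> y \<preceq> z"
proof -
  have "x \<sqinter> y = (x \<sqinter> y) \<odot> ((x \<rightarrow> z) \<squnion> (y \<rightarrow> z))"
    using assms by simp
  also have "\<dots> = (x \<sqinter> y) \<odot> (x \<rightarrow> z) \<squnion> (x \<sqinter> y) \<odot> (y \<rightarrow> z)"
    using assms(1-3) by (simp add: odot_join_distrib)
  also have "\<dots> \<preceq> z"
    using assms(1-3)
    by (intro join_least) (simp_all add: odot_imp_le_of_le meet_lower1 meet_lower2)
  finally show ?thesis .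
qed

end

theorem theorem3p5:
  assumes "residuated_lattice L meet join odot imp zero one"
  shows "BL_algebra L meet join odot imp zero one \<longleftrightarrow>
    (\<forall>x\<in>L. \<forall>y\<in>L. \<forall>z\<in>L.
       imp (odot x (imp x y)) z = join (imp x z) (imp y z))"
proof -
  interpret residuated_lattice_on L meet join odot imp zero one
    using assms by unfold_locales
  show ?thesis
  proof
    assume "BL_algebra L meet join odot imp zero one"
    then show "\<forall>x\<in>L. \<forall>y\<in>L. \<forall>z\<in>L. imp (odot x (imp x y)) z = join (imp x z) (imp y z)"
      unfolding BL_algebra_def by (simp add: imp_meet_eq_join_imp)
  next
    assume identity: "\<forall>x\<in>L. \<forall>y\<in>L. \<forall>z\<in>L. imp (odot x (imp x y)) z = join (imp x z) (imp y z)"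
    have divisible: "odot x (imp x y) = meet x y" if "x \<in> L" "y \<in> L" for x y
      using that identity[rule_format, of x y "odot x (imp x y)"]
      by (simp add: imp_self le_antisym meet_le_if_join_imp_eq_one odot_imp_le_meet)
    have "one \<preceq> join (imp x y) (imp y x)" if "x \<in> L" "y \<in> L" for x y
      using that identity[rule_format, of x y "meet x y"]
      by (simp add: divisible imp_self join_mono imp_mono_right meet_lower1 meet_lower2)
    then show "BL_algebra L meet join odot imp zero one"
      unfolding BL_algebra_def by (simp add: assms divisible le_one_iff)
  qed
qed

end
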